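(* Define $\tau_{k} = \{T \mid T \subseteq \Omega, |T| = k \in \mathbb{N}\}$ and let $\mathcal{B}_m$ denote any set of binary strings (information resources) of length $m$ or less. Define $q := \mathbb{E}_{T, F}\left[\phi(T,F)\right] = \mathbb{E}_{T,F}[P_\phi(\omega \in T \mid F)] = \Pr(\omega \in T; \mathcal{A})$, the expected decomposable probability of success under the joint distribution on $T \in \tau_{k}$ and $F \in \mathcal{B}_m$ for any fixed algorithm $\mathcal{A}$. Then \[ q \leq \frac{I(T; F) + D(P_T \| \mathcal{U}_T) + 1}{I_{\Omega}}, \] where $I_{\Omega} = -\log k/|\Omega|$, $D(P_T \| \mathcal{U}_T)$ is the Kullback-Leibler divergence between the marginal distribution on $T$ and the uniform distribution on $T$, and $I(T; F)$ is the mutual information. Alternatively, \[ \Pr(\omega \in T; \mathcal{A}) \leq \frac{H(\mathcal{U}_T) - H(T \mid F) + 1}{I_{\Omega}}, \] where $H(\mathcal{U}_T) = \log\binom{|\Omega|}{k}$.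
   Context: Algorithmic search framework: finite discrete search space $\Omega$, random target set $T\subseteq\Omega$ with indicator vector $\mathbf{t}$, random information resource $F$, and a fixed search algorithm $\mathcal{A}$ whose sampled element $\omega$ (or $X$) depends on $T$ only through $F$. A probability-of-success metric $\phi$ is decomposable if there exists a probability vector $\mathbf{P}_{\phi,f}$ over $\Omega$, not a function of the target, with $\phi(t,f)=\mathbf{t}^{\top}\mathbf{P}_{\phi,f}=P_\phi(X\in t\mid f)$. *)

theory Defs
  imports "HOL-Probability.Probability_Mass_Function"
begin

text \<open>Discrete information-theoretic quantities (in bits) for a joint
distribution J of a target set T and an information resource F.
Sums range over supports, i.e. the convention 0 log 0 = 0.\<close>

definition marg_T :: "('a \<times> 'b) pmf \<Rightarrow> 'a pmf" where
  "marg_T J = map_pmf fst J"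

definition marg_F :: "('a \<times> 'b) pmf \<Rightarrow> 'b pmf" where
  "marg_F J = map_pmf snd J"

definition mutual_info :: "('a \<times> 'b) pmf \<Rightarrow> real" where
  "mutual_info J = (\<Sum>(t,f)\<in>set_pmf J.
      pmf J (t,f) * log 2 (pmf J (t,f) / (pmf (marg_T J) t * pmf (marg_F J) f)))"

definition cond_entropy :: "('a \<times> 'b) pmf \<Rightarrow> real" where
  "cond_entropy J = - (\<Sum>(t,f)\<in>set_pmf J.
      pmf J (t,f) * log 2 (pmf J (t,f) / pmf (marg_F J) f))"

definition kl_div :: "'a pmf \<Rightarrow> 'a pmf \<Rightarrow> real" where
  "kl_div P Q = (\<Sum>x\<in>set_pmf P. pmf P x * log 2 (pmf P x / pmf Q x))"

definition tau :: "'a set \<Rightarrow> nat \<Rightarrow> 'a set set" where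
  "tau \<Omega> k = {T. T \<subseteq> \<Omega> \<and> card T = k}"

definition info_Omega :: "'a set \<Rightarrow> nat \<Rightarrow> real" where
  "info_Omega \<Omega> k = - log 2 (real k / real (card \<Omega>))"

end

theory Submission
  imports Defs "HOL-Analysis.Convex"
begin

text \<open>Put a = |\<Omega>|/k, so that I_\<Omega> = log a, and C = binomial |\<Omega>| k.
Convexity gives a^x \<le> 1 + x (a - 1) on [0,1], and double counting gives
\<Sum>_t P_f(t) = binomial (|\<Omega>|-1) (k-1) = C/a over all k-subsets t; hence
\<Sum>_t a^(P_f(t)) \<le> 2C for every f. So the weights P_F(f) a^(P_f(t)) / (2C)
sum to at most 1 over the support of J, and Gibbs' inequality against J yields
q I_\<Omega> + H(T|F) \<le> log C + 1. The first bound then follows from the identity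
I(T;F) + D(P_T || U_T) = log C - H(T|F).\<close>

definition shannon_entropy :: "'a pmf \<Rightarrow> real" where
  "shannon_entropy p = - (\<Sum>x\<in>set_pmf p. pmf p x * log 2 (pmf p x))"

lemma expectation_eq_sum_set_pmf:
  fixes f :: "'a \<Rightarrow> real"
  assumes "finite (set_pmf p)"
  shows "measure_pmf.expectation p f = (\<Sum>x\<in>set_pmf p. pmf p x * f x)"
  using assms by (subst integral_measure_pmf_real) (auto simp: mult.commute)

lemma sum_set_pmf_map_pmf:
  fixes g :: "'b \<Rightarrow> real"
  assumes "finite (set_pmf p)"
  shows "(\<Sum>x\<in>set_pmf p. pmf p x * g (f x))
       = (\<Sum>y\<in>set_pmf (map_pmf f p). pmf (map_pmf f p) y * g y)"
proof -
  have "finite (set_pmf (map_pmf f p))" using assms by simp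
  then show ?thesis
    using assms by (simp flip: expectation_eq_sum_set_pmf del: set_map_pmf)
qed

lemma mutual_info_eq_entropy_minus_cond_entropy:
  assumes J: "finite (set_pmf J)"
  shows "mutual_info J = shannon_entropy (marg_T J) - cond_entropy J"
proof -
  have "mutual_info J = (\<Sum>x\<in>set_pmf J.
      pmf J x * log 2 (pmf J x / (pmf (marg_T J) (fst x) * pmf (marg_F J) (snd x))))"
    by (simp add: mutual_info_def split_def)
  also have "\<dots> = (\<Sum>x\<in>set_pmf J.
      pmf J x * log 2 (pmf J x / pmf (marg_F J) (snd x)) - pmf J x * log 2 (pmf (marg_T J) (fst x)))"
  proof (rule sum.cong[OF refl])
    fix x assume x: "x \<in> set_pmf J"
    then have "0 < pmf (marg_T J) (fst x)" "0 < pmf (marg_F J) (snd x)"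
      by (auto simp: marg_T_def marg_F_def pmf_positive)
    with x show "pmf J x * log 2 (pmf J x / (pmf (marg_T J) (fst x) * pmf (marg_F J) (snd x)))
        = pmf J x * log 2 (pmf J x / pmf (marg_F J) (snd x)) - pmf J x * log 2 (pmf (marg_T J) (fst x))"
      by (simp add: pmf_positive log_divide_pos log_mult_pos algebra_simps)
  qed
  also have "\<dots> = - cond_entropy J - (\<Sum>x\<in>set_pmf J. pmf J x * log 2 (pmf (marg_T J) (fst x)))"
    by (simp add: cond_entropy_def split_def sum_subtractf del: log_divide)
  also have "(\<Sum>x\<in>set_pmf J. pmf J x * log 2 (pmf (marg_T J) (fst x))) = - shannon_entropy (marg_T J)"
    using sum_set_pmf_map_pmf[OF J, of "\<lambda>t. log 2 (pmf (marg_T J) t)" fst]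
    by (simp add: shannon_entropy_def marg_T_def)
  finally show ?thesis by simp
qed

lemma kl_div_pmf_of_set:
  assumes A: "finite A" "set_pmf p \<subseteq> A"
  shows "kl_div p (pmf_of_set A) = log 2 (card A) - shannon_entropy p"
proof -
  have "A \<noteq> {}" using A(2) set_pmf_not_empty[of p] by blast
  have "finite (set_pmf p)" using A finite_subset by blast
  have "kl_div p (pmf_of_set A) = (\<Sum>x\<in>set_pmf p. pmf p x * log 2 (pmf p x) + pmf p x * log 2 (card A))"
    unfolding kl_div_def
  proof (intro sum.cong refl)
    fix x assume x: "x \<in> set_pmf p"
    then have "pmf (pmf_of_set A) x = 1 / card A" "0 < pmf p x" "0 < card A"
      using A \<open>A \<noteq> {}\<close> by (auto simp: pmf_positive card_gt_0_iff)
    then show "pmf p x * log 2 (pmf p x / pmf (pmf_of_set A) x)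
        = pmf p x * log 2 (pmf p x) + pmf p x * log 2 (card A)"
      by (simp add: log_mult_pos algebra_simps)
  qed
  also have "\<dots> = log 2 (card A) - shannon_entropy p"
    using sum_pmf_eq_1[OF \<open>finite (set_pmf p)\<close> order_refl]
    by (simp add: shannon_entropy_def sum.distrib flip: sum_distrib_right)
  finally show ?thesis .
qed

lemma gibbs_inequality:
  fixes r :: "'a \<Rightarrow> real"
  assumes p: "finite (set_pmf p)" and r: "\<And>x. x \<in> set_pmf p \<Longrightarrow> 0 < r x"
    and r_sum: "(\<Sum>x\<in>set_pmf p. r x) \<le> 1"
  shows "(\<Sum>x\<in>set_pmf p. pmf p x * log 2 (r x / pmf p x)) \<le> 0"
proof -
  have "(\<Sum>x\<in>set_pmf p. pmf p x * log 2 (r x / pmf p x)) \<le> (\<Sum>x\<in>set_pmf p. (r x - pmf p x) / ln 2)"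
  proof (rule sum_mono)
    fix x assume x: "x \<in> set_pmf p"
    have "log 2 (r x / pmf p x) \<le> (r x / pmf p x - 1) / ln 2"
      unfolding log_def using r[OF x] x by (intro divide_right_mono ln_le_minus_one) (auto simp: pmf_positive)
    then show "pmf p x * log 2 (r x / pmf p x) \<le> (r x - pmf p x) / ln 2"
      using x by (auto simp: pmf_positive field_simps dest: mult_left_mono[of _ _ "pmf p x"])
  qed
  also have "\<dots> = ((\<Sum>x\<in>set_pmf p. r x) - 1) / ln 2"
    using sum_pmf_eq_1[OF p order_refl] by (simp add: sum_subtractf flip: sum_divide_distrib)
  also have "\<dots> \<le> 0"
    using r_sum by (simp add: divide_nonpos_pos)
  finally show ?thesis .
qed

lemma powr_le_affine:
  fixes a x :: real
  assumes "0 < a" "0 \<le> x" "x \<le> 1"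
  shows "a powr x \<le> 1 + x * (a - 1)"
proof -
  have "exp ((1 - x) *\<^sub>R 0 + x *\<^sub>R ln a) \<le> (1 - x) * exp 0 + x * exp (ln a)"
    using assms by (intro convex_onD[OF exp_convex]) auto
  then show ?thesis
    using assms by (simp add: powr_def algebra_simps)
qed

lemma finite_tau: "finite \<Omega> \<Longrightarrow> finite (tau \<Omega> k)"
  unfolding tau_def by (rule finite_subset[of _ "Pow \<Omega>"]) auto

lemma card_tau: "finite \<Omega> \<Longrightarrow> card (tau \<Omega> k) = card \<Omega> choose k"
  unfolding tau_def by (rule n_subsets)

lemma card_tau_containing:
  assumes "finite \<Omega>" "\<omega> \<in> \<Omega>" "0 < k"
  shows "card {t \<in> tau \<Omega> k. \<omega> \<in> t} = (card \<Omega> - 1) choose (k - 1)"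
proof -
  have "bij_betw (\<lambda>t. t - {\<omega>}) {t \<in> tau \<Omega> k. \<omega> \<in> t} (tau (\<Omega> - {\<omega>}) (k - 1))"
  proof (rule bij_betw_byWitness[where f' = "insert \<omega>"])
    show "(\<lambda>t. t - {\<omega>}) ` {t \<in> tau \<Omega> k. \<omega> \<in> t} \<subseteq> tau (\<Omega> - {\<omega>}) (k - 1)"
      using assms by (auto simp: tau_def card_Diff_singleton dest: finite_subset)
    show "insert \<omega> ` tau (\<Omega> - {\<omega>}) (k - 1) \<subseteq> {t \<in> tau \<Omega> k. \<omega> \<in> t}"
    proof (rule image_subsetI)
      fix s assume "s \<in> tau (\<Omega> - {\<omega>}) (k - 1)"
      then have "s \<subseteq> \<Omega> - {\<omega>}" "card s = k - 1" "finite s"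
        using assms(1) finite_subset by (auto simp: tau_def)
      then show "insert \<omega> s \<in> {t \<in> tau \<Omega> k. \<omega> \<in> t}"
        using assms by (auto simp: tau_def card_insert_if)
    qed
  qed (auto simp: tau_def)
  then show ?thesis
    using assms by (simp add: bij_betw_same_card card_tau)
qed

lemma sum_prob_tau:
  assumes \<Omega>: "finite \<Omega>" and k: "0 < k" and p: "set_pmf p \<subseteq> \<Omega>"
  shows "(\<Sum>t\<in>tau \<Omega> k. measure_pmf.prob p t) = (card \<Omega> - 1) choose (k - 1)"
proof -
  have "(\<Sum>t\<in>tau \<Omega> k. measure_pmf.prob p t) = (\<Sum>t\<in>tau \<Omega> k. \<Sum>\<omega>\<in>{\<omega>\<in>\<Omega>. \<omega> \<in> t}. pmf p \<omega>)"
  proof (rule sum.cong[OF refl])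
    fix t assume "t \<in> tau \<Omega> k"
    then have "t \<subseteq> \<Omega>" by (simp add: tau_def)
    then show "measure_pmf.prob p t = (\<Sum>\<omega>\<in>{\<omega>\<in>\<Omega>. \<omega> \<in> t}. pmf p \<omega>)"
      using \<Omega> by (simp add: measure_measure_pmf_finite Int_absorb1 Collect_conj_eq finite_subset
          flip: Int_def)
  qed
  also have "\<dots> = (\<Sum>\<omega>\<in>\<Omega>. \<Sum>t\<in>{t\<in>tau \<Omega> k. \<omega> \<in> t}. pmf p \<omega>)"
    by (rule sum.swap_restrict[OF finite_tau[OF \<Omega>] \<Omega>])
  also have "\<dots> = (\<Sum>\<omega>\<in>\<Omega>. pmf p \<omega>) * ((card \<Omega> - 1) choose (k - 1))"
    using \<Omega> k by (simp add: card_tau_containing sum_distrib_right mult.commute)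
  finally show ?thesis
    using sum_pmf_eq_1[OF \<Omega> p] by simp
qed

lemma sum_powr_prob_tau_le:
  assumes \<Omega>: "finite \<Omega>" and k: "0 < k" "k \<le> card \<Omega>" and p: "set_pmf p \<subseteq> \<Omega>"
  shows "(\<Sum>t\<in>tau \<Omega> k. (card \<Omega> / k) powr measure_pmf.prob p t) \<le> 2 * (card \<Omega> choose k)"
proof -
  define a where "a = real (card \<Omega>) / k"
  have "0 < a" using k unfolding a_def by simp
  have "(\<Sum>t\<in>tau \<Omega> k. a powr measure_pmf.prob p t) \<le> (\<Sum>t\<in>tau \<Omega> k. 1 + measure_pmf.prob p t * (a - 1))"
    using \<open>0 < a\<close> by (intro sum_mono powr_le_affine) auto
  also have "\<dots> = real (card \<Omega> choose k) + real ((card \<Omega> - 1) choose (k - 1)) * (a - 1)"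
    using assms by (simp add: sum.distrib card_tau sum_prob_tau flip: sum_distrib_right)
  also have "\<dots> = 2 * real (card \<Omega> choose k) - real ((card \<Omega> - 1) choose (k - 1))"
    using times_binomial_minus1_eq[OF k(1), of "card \<Omega>"] k
    unfolding a_def by (simp add: field_simps flip: of_nat_mult)
  finally show ?thesis
    unfolding a_def by simp
qed

lemma sum_set_pmf_powr_prob_le:
  fixes J :: "('a set \<times> 'b) pmf" and P :: "'b \<Rightarrow> 'a pmf"
  assumes \<Omega>: "finite \<Omega>" and k: "0 < k" "k \<le> card \<Omega>"
    and J: "finite (set_pmf J)" "set_pmf (marg_T J) \<subseteq> tau \<Omega> k"
    and P: "\<And>f. set_pmf (P f) \<subseteq> \<Omega>"
  shows "(\<Sum>x\<in>set_pmf J. pmf (marg_F J) (snd x) * (card \<Omega> / k) powr measure_pmf.prob (P (snd x)) (fst x))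
         \<le> 2 * (card \<Omega> choose k)"
proof -
  define F where "F = marg_F J"
  define g where "g x = pmf F (snd x) * (card \<Omega> / k) powr measure_pmf.prob (P (snd x)) (fst x)" for x
  have J_sub: "set_pmf J \<subseteq> tau \<Omega> k \<times> set_pmf F"
    using J(2) by (force simp: F_def marg_T_def marg_F_def)
  have finite_F: "finite (set_pmf F)"
    using J(1) by (simp add: F_def marg_F_def)
  have "(\<Sum>x\<in>set_pmf J. g x) \<le> (\<Sum>x\<in>tau \<Omega> k \<times> set_pmf F. g x)"
    using J_sub finite_tau[OF \<Omega>] finite_F by (intro sum_mono2) (auto simp: g_def)
  also have "\<dots> = (\<Sum>t\<in>tau \<Omega> k. \<Sum>f\<in>set_pmf F. g (t, f))"
    unfolding sum.cartesian_product by simp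
  also have "\<dots> = (\<Sum>f\<in>set_pmf F. pmf F f * (\<Sum>t\<in>tau \<Omega> k. (card \<Omega> / k) powr measure_pmf.prob (P f) t))"
    by (subst sum.swap) (simp add: g_def sum_distrib_left)
  also have "\<dots> \<le> (\<Sum>f\<in>set_pmf F. pmf F f * (2 * (card \<Omega> choose k)))"
    using sum_powr_prob_tau_le[OF \<Omega> k P] by (intro sum_mono mult_left_mono) auto
  also have "\<dots> = 2 * (card \<Omega> choose k)"
    using sum_pmf_eq_1[OF finite_F order_refl] by (simp flip: sum_distrib_right)
  finally show ?thesis
    by (simp add: g_def F_def)
qed

lemma expected_success_times_info_Omega_le:
  fixes J :: "('a set \<times> 'b) pmf" and P :: "'b \<Rightarrow> 'a pmf"
  assumes \<Omega>: "finite \<Omega>" and k: "0 < k" "k \<le> card \<Omega>"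
    and J: "finite (set_pmf J)" "set_pmf (marg_T J) \<subseteq> tau \<Omega> k"
    and P: "\<And>f. set_pmf (P f) \<subseteq> \<Omega>"
  shows "measure_pmf.expectation J (\<lambda>(t, f). measure_pmf.prob (P f) t) * info_Omega \<Omega> k
         \<le> log 2 (card \<Omega> choose k) - cond_entropy J + 1"
proof -
  define a where "a = real (card \<Omega>) / k"
  define C where "C = real (card \<Omega> choose k)"
  define s where "s x = measure_pmf.prob (P (snd x)) (fst x)" for x
  define F where "F = marg_F J"
  define r where "r x = pmf F (snd x) * a powr s x / (2 * C)" for x
  have "0 < a" "0 < C"
    using k unfolding a_def C_def by auto
  have L: "info_Omega \<Omega> k = log 2 a"
    using k unfolding info_Omega_def a_def by (simp add: log_divide_pos)
  have F_pos: "0 < pmf F (snd x)" if "x \<in> set_pmf J" for x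
    using that by (auto simp: F_def marg_F_def pmf_positive)
  have r_sum: "(\<Sum>x\<in>set_pmf J. r x) \<le> 1"
    using sum_set_pmf_powr_prob_le[OF \<Omega> k J P] \<open>0 < C\<close>
    by (simp add: r_def a_def C_def s_def F_def flip: sum_divide_distrib)
  have "(\<Sum>x\<in>set_pmf J. pmf J x * log 2 (r x / pmf J x))
      = (\<Sum>x\<in>set_pmf J. pmf J x * s x * log 2 a - pmf J x * log 2 (pmf J x / pmf F (snd x))
          - pmf J x * log 2 (2 * C))"
  proof (rule sum.cong[OF refl])
    fix x assume x: "x \<in> set_pmf J"
    then have "0 < pmf J x" "0 < pmf F (snd x)"
      by (auto simp: pmf_positive F_pos)
    then show "pmf J x * log 2 (r x / pmf J x) = pmf J x * s x * log 2 a
        - pmf J x * log 2 (pmf J x / pmf F (snd x)) - pmf J x * log 2 (2 * C)"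
      using \<open>0 < a\<close> \<open>0 < C\<close>
      by (simp add: r_def log_divide_pos log_mult_pos log_powr algebra_simps)
  qed
  also have "\<dots> = (\<Sum>x\<in>set_pmf J. pmf J x * s x) * log 2 a + cond_entropy J
      - (\<Sum>x\<in>set_pmf J. pmf J x) * log 2 (2 * C)"
    by (simp add: cond_entropy_def split_def F_def sum_subtractf sum_distrib_right del: log_divide)
  also have "\<dots> = measure_pmf.expectation J s * log 2 a + cond_entropy J - log 2 (2 * C)"
    using J(1) by (simp add: expectation_eq_sum_set_pmf sum_pmf_eq_1)
  finally have "measure_pmf.expectation J s * log 2 a + cond_entropy J \<le> log 2 (2 * C)"
    using gibbs_inequality[OF J(1) _ r_sum] F_pos \<open>0 < a\<close> \<open>0 < C\<close> by (simp add: r_def)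
  moreover have "(\<lambda>(t, f). measure_pmf.prob (P f) t) = s"
    by (simp add: s_def fun_eq_iff)
  ultimately show ?thesis
    using \<open>0 < C\<close> by (simp add: L C_def log_mult_pos)
qed

theorem theorem5:
  fixes \<Omega> :: "'a set" and k m :: nat and B :: "bool list set"
    and J :: "('a set \<times> bool list) pmf"
    and P :: "bool list \<Rightarrow> 'a pmf"
  assumes "finite \<Omega>"
    and "0 < k" and "k < card \<Omega>"
    and "\<forall>f\<in>B. length f \<le> m"
    and "set_pmf J \<subseteq> tau \<Omega> k \<times> B"
    and "\<forall>f. set_pmf (P f) \<subseteq> \<Omega>"
  defines "q \<equiv> measure_pmf.expectation J (\<lambda>(t, f). measure_pmf.prob (P f) t)"
  shows "q \<le> (mutual_info J + kl_div (marg_T J) (pmf_of_set (tau \<Omega> k)) + 1) / info_Omega \<Omega> k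
       \<and> q \<le> (log 2 (real (card \<Omega> choose k)) - cond_entropy J + 1) / info_Omega \<Omega> k"
proof -
  have "finite B"
    using assms(4) by (intro finite_subset[OF _ finite_lists_length_le[of UNIV m]]) auto
  then have J: "finite (set_pmf J)"
    using assms(1) by (intro finite_subset[OF assms(5)] finite_SigmaI finite_tau)
  have T: "set_pmf (marg_T J) \<subseteq> tau \<Omega> k"
    using assms(5) by (auto simp: marg_T_def)
  have "0 < info_Omega \<Omega> k"
    using assms(2,3) by (simp add: info_Omega_def divide_less_eq)
  moreover have "q * info_Omega \<Omega> k \<le> log 2 (card \<Omega> choose k) - cond_entropy J + 1"
    unfolding q_def using assms(1-3,6) J T by (intro expected_success_times_info_Omega_le) simp_all
  moreover have "mutual_info J + kl_div (marg_T J) (pmf_of_set (tau \<Omega> k))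
      = log 2 (card \<Omega> choose k) - cond_entropy J"
    using J T assms(1)
    by (simp add: mutual_info_eq_entropy_minus_cond_entropy kl_div_pmf_of_set finite_tau card_tau)
  ultimately show ?thesis
    by (simp add: pos_le_divide_eq)
qed

end
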